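(* Consider the generalized one-way trading problem (GOT) with capacity $C>0$ and bounds $0<L\le U$, $\theta:=U/L$, under Assumption A. Let $\alpha^*:=1+\ln\theta$, $\beta^*:=C/\alpha^*$, and define the threshold function $$\phi^*(w)=\begin{cases} L & w\in[0,\beta^* ),\\ L\,e^{(1+\ln\theta)w/C-1} & w\in[\beta^*,C],\\ +\infty & w>C.\end{cases}$$ Then the online threshold-based algorithm $\mathsf{OTA}_{\phi^*}$ for GOT has competitive ratio $1+\ln\theta$.
   Context: GOT: a single knapsack of capacity $C$; items $n=1,\dots,N$ arrive one at a time. Item $n$ has a size $D_n>0$ and a value function $g_n:[0,D_n]\to\mathbb{R}_{\ge0}$, revealed on arrival. The offline problem is $\max\sum_n g_n(y_n)$ subject to $\sum_n y_n\le C$, $0\le y_n\le D_n$. Assumption A: each $g_n$ is non-decreasing, differentiable and concave, $g_n(0)=0$, and $L\le g_n'\le U$ on $[0,D_n]$, where $L,U$ (and $C$) are known in advance. An online algorithm irrevocably chooses $y_n$ upon arrival of item $n$ using only items $1,\dots,n$ and $C,L,U$, keeping the constraints feasible. Its competitive ratio is $\sup_{\mathcal I}\mathrm{OPT}(\mathcal I)/\mathrm{ALG}(\mathcal I)$ over all instances satisfying Assumption A, where OPT is the offline optimum and ALG the value obtained by the algorithm; it is $\alpha$-competitive if this is at most $\alpha$. A threshold function is a non-decreasing $\phi:[0,C]\to\mathbb{R}$, extended by $\phi(w)=+\infty$ for $w>C$. $\mathsf{OTA}_\phi$: start with utilization $w^{(1)}=0$; upon arrival of item $n$ choose $y_n^*\in\arg\max_{0\le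 y\le D_n}\, g_n(y)-\int_{w^{(n)}}^{w^{(n)}+y}\phi(u)\,du$ and set $w^{(n+1)}=w^{(n)}+y_n^*$. *)

theory Defs
  imports "HOL-Analysis.Analysis"
begin

text \<open>An item is a pair (D, g): size D and value function g.
  An instance is a finite list of items, in arrival order.\<close>

type_synonym item = "real \<times> (real \<Rightarrow> real)"

text \<open>Assumption A for a single item, given the known bounds L, U.
  Differentiability on the closed interval [0,D] is taken one-sidedly at the endpoints
  (derivative within [0,D]).\<close>
definition assumption_A :: "real \<Rightarrow> real \<Rightarrow> item \<Rightarrow> bool" where
  "assumption_A L U it \<longleftrightarrow>
     (let D = fst it; g = snd it in
        D > 0 \<and> g 0 = 0 \<and> mono_on {0..D} g \<and> concave_on {0..D} g \<and>
        (\<exists>g'. \<forall>y\<in>{0..D}. (g has_real_derivative g' y) (at y within {0..D}) \<and>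
                             L \<le> g' y \<and> g' y \<le> U))"

definition valid_instance :: "real \<Rightarrow> real \<Rightarrow> item list \<Rightarrow> bool" where
  "valid_instance L U items \<longleftrightarrow> (\<forall>it\<in>set items. assumption_A L U it)"

definition total_value :: "item list \<Rightarrow> real list \<Rightarrow> real" where
  "total_value items ys = sum_list (map (\<lambda>(it, y). snd it y) (zip items ys))"

definition feasible_alloc :: "real \<Rightarrow> item list \<Rightarrow> real list \<Rightarrow> bool" where
  "feasible_alloc C items ys \<longleftrightarrow>
     length ys = length items \<and>
     (\<forall>i<length items. 0 \<le> ys ! i \<and> ys ! i \<le> fst (items ! i)) \<and>
     sum_list ys \<le> C"

definition OPT :: "real \<Rightarrow> item list \<Rightarrow> real" where
  "OPT C items = Sup {total_value items ys | ys. feasible_alloc C items ys}"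

text \<open>Since the threshold is
  extended by +\<infinity> beyond C, any y with w + y > C has pseudo-utility -\<infinity>, so only
  y with w + y \<le> C are admissible (y = 0 always is).\<close>
definition ota_argmax :: "real \<Rightarrow> (real \<Rightarrow> real) \<Rightarrow> real \<Rightarrow> item \<Rightarrow> real \<Rightarrow> bool" where
  "ota_argmax C phi w it y \<longleftrightarrow>
     0 \<le> y \<and> y \<le> fst it \<and> w + y \<le> C \<and>
     (\<forall>z. 0 \<le> z \<and> z \<le> fst it \<and> w + z \<le> C \<longrightarrow>
          snd it z - integral {w..w+z} phi \<le> snd it y - integral {w..w+y} phi)"

text \<open>Tie-breaking convention: the largest maximizer is chosen.\<close>
definition ota_choice :: "real \<Rightarrow> (real \<Rightarrow> real) \<Rightarrow> real \<Rightarrow> item \<Rightarrow> real" where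
  "ota_choice C phi w it = (GREATEST y. ota_argmax C phi w it y)"

fun ota_run :: "real \<Rightarrow> (real \<Rightarrow> real) \<Rightarrow> real \<Rightarrow> item list \<Rightarrow> real list" where
  "ota_run C phi w [] = []"
| "ota_run C phi w (it # its) =
     (let y = ota_choice C phi w it in y # ota_run C phi (w + y) its)"

definition ALG_OTA :: "real \<Rightarrow> (real \<Rightarrow> real) \<Rightarrow> item list \<Rightarrow> real" where
  "ALG_OTA C phi items = total_value items (ota_run C phi 0 items)"

text \<open>Competitive ratio: sup over all valid instances of OPT/ALG, computed in the extended
  reals (so a positive OPT with ALG = 0 gives +\<infinity>, and 0/0 = 0).\<close>
definition competitive_ratio_OTA :: "real \<Rightarrow> real \<Rightarrow> real \<Rightarrow> (real \<Rightarrow> real) \<Rightarrow> ereal" where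
  "competitive_ratio_OTA C L U phi =
     (SUP items \<in> {items. valid_instance L U items}.
        ereal (OPT C items) / ereal (ALG_OTA C phi items))"

text \<open>The threshold function phi* on [0,C] (values beyond C are never used, see ota_argmax).\<close>
definition phi_star :: "real \<Rightarrow> real \<Rightarrow> real \<Rightarrow> real \<Rightarrow> real" where
  "phi_star C L U w =
     (let \<alpha> = 1 + ln (U / L); \<beta> = C / \<alpha> in
        if w < \<beta> then L else L * exp (\<alpha> * w / C - 1))"

end

theory Submission
  imports Defs
begin

text \<open>
  Online primal-dual argument. Write \<Phi> w for the integral of the threshold \<phi> over [0, w] and W for
  the final utilization of OTA. Each step of OTA maximizes the pseudo-utility
  g y - (\<Phi> (w + y) - \<Phi> w); by concavity of g and continuity of \<phi> this is enough to make the price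
  \<phi> W a dual solution paid for by the pseudo-utilities, i.e. every feasible allocation has value at
  most ALG - \<Phi> W + \<phi> W * C. For \<phi>* one has \<Phi> W = \<beta>* \<phi>* W once W \<ge> \<beta>*, so that
  \<phi>* W * C = \<alpha>* \<Phi> W \<le> \<alpha>* ALG; if W < \<beta>*, the threshold never exceeded L and OTA accepted every
  item entirely. The ratio is attained by a single item of size C with constant marginal value L,
  of which OTA accepts only \<beta>*.
\<close>

lemma assumption_A_continuous:
  assumes "assumption_A L U (D, g)"
  shows "continuous_on {0..D} g"
proof -
  from assms obtain g' where "\<forall>y\<in>{0..D}. (g has_real_derivative g' y) (at y within {0..D})"
    unfolding assumption_A_def Let_def by auto
  then show ?thesis
    by (intro DERIV_continuous_on) blast
qed

lemma assumption_A_increment_bounds: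
  assumes A: "assumption_A L U (D, g)" and "0 \<le> a" "a \<le> b" "b \<le> D"
  shows "L * (b - a) \<le> g b - g a" and "g b - g a \<le> U * (b - a)"
proof -
  from A obtain g' where g': "\<forall>y\<in>{0..D}.
      (g has_real_derivative g' y) (at y within {0..D}) \<and> L \<le> g' y \<and> g' y \<le> U"
    unfolding assumption_A_def Let_def by auto
  have cont: "continuous_on {a..b} g"
    using assumption_A_continuous[OF A] by (rule continuous_on_subset) (use assms in auto)
  have deriv: "(g has_real_derivative g' x) (at x) \<and> L \<le> g' x \<and> g' x \<le> U"
    if "a < x" "x < b" for x
  proof -
    have "x \<in> interior {0..D}" using that assms by auto
    moreover have "x \<in> {0..D}" using that assms by auto
    ultimately show ?thesis using g' at_within_interior[of x "{0..D}"] by metis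
  qed
  have "g a - L * a \<le> g b - L * b"
  proof (rule DERIV_nonneg_imp_increasing_open[OF \<open>a \<le> b\<close>])
    fix x assume "a < x" "x < b"
    with deriv show "\<exists>y. ((\<lambda>y. g y - L * y) has_real_derivative y) (at x) \<and> 0 \<le> y"
      by (intro exI[of _ "g' x - L"]) (auto intro!: derivative_eq_intros)
  qed (use cont in \<open>intro continuous_intros\<close>)
  then show "L * (b - a) \<le> g b - g a" by (simp add: algebra_simps)
  have "g b - U * b \<le> g a - U * a"
  proof (rule DERIV_nonpos_imp_decreasing_open[OF \<open>a \<le> b\<close>])
    fix x assume "a < x" "x < b"
    with deriv show "\<exists>y. ((\<lambda>y. g y - U * y) has_real_derivative y) (at x) \<and> y \<le> 0"
      by (intro exI[of _ "g' x - U"]) (auto intro!: derivative_eq_intros)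
  qed (use cont in \<open>intro continuous_intros\<close>)
  then show "g b - g a \<le> U * (b - a)" by (simp add: algebra_simps)
qed

lemma Greatest_maximizer_compact:
  fixes F :: "real \<Rightarrow> real"
  assumes "compact S" "S \<noteq> {}" "continuous_on S F"
  defines "M \<equiv> \<lambda>y. y \<in> S \<and> (\<forall>z\<in>S. F z \<le> F y)"
  shows "M (GREATEST y. M y)" and "M z \<Longrightarrow> z \<le> (GREATEST y. M y)"
proof -
  obtain y0 where y0: "y0 \<in> S" "\<And>z. z \<in> S \<Longrightarrow> F z \<le> F y0"
    using continuous_attains_sup[OF assms(1-3)] by blast
  have M_eq: "{y. M y} = S \<inter> {y \<in> S. F y = F y0}"
  proof (intro set_eqI iffI)
    fix y assume "y \<in> {y. M y}"
    then show "y \<in> S \<inter> {y \<in> S. F y = F y0}"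
      unfolding M_def using y0 by (simp add: order.antisym)
  next
    fix y assume "y \<in> S \<inter> {y \<in> S. F y = F y0}"
    then show "y \<in> {y. M y}"
      unfolding M_def using y0 by simp
  qed
  have "closed {y \<in> S. F y = F y0}"
    using assms(1,3) by (intro continuous_closed_preimage_constant compact_imp_closed)
  then have "compact {y. M y}"
    unfolding M_eq using assms(1) by (rule compact_Int_closed[rotated])
  moreover have "M y0"
    unfolding M_def using y0 by blast
  ultimately obtain ym where "M ym" "\<And>z. M z \<Longrightarrow> z \<le> ym"
    using compact_attains_sup[of "{y. M y}"] by blast
  moreover from this have "(GREATEST y. M y) = ym"
    by (intro Greatest_equality)
  ultimately show "M (GREATEST y. M y)" "M z \<Longrightarrow> z \<le> (GREATEST y. M y)"
    by auto
qed

abbreviation within_sizes :: "item list \<Rightarrow> real list \<Rightarrow> bool" where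
  "within_sizes items xs \<equiv> list_all2 (\<lambda>it x. 0 \<le> x \<and> x \<le> fst it) items xs"

lemma feasible_alloc_iff: "feasible_alloc C items ys \<longleftrightarrow> within_sizes items ys \<and> sum_list ys \<le> C"
  by (auto simp: feasible_alloc_def list_all2_conv_all_nth)

lemma total_value_Nil [simp]: "total_value [] xs = 0"
  by (simp add: total_value_def)

lemma total_value_Cons [simp]: "total_value (it # items) (x # xs) = snd it x + total_value items xs"
  by (simp add: total_value_def)

lemma valid_instance_Cons [simp]:
  "valid_instance L U (it # items) \<longleftrightarrow> assumption_A L U it \<and> valid_instance L U items"
  by (simp add: valid_instance_def)

lemma zero_alloc_feasible:
  assumes "valid_instance L U items" "0 \<le> C"
  shows "feasible_alloc C items (replicate (length items) 0)"
    and "total_value items (replicate (length items) 0) = 0"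
  using assms by (induction items) (auto simp: feasible_alloc_iff assumption_A_def)

lemma OPT_le:
  assumes "valid_instance L U items" "0 \<le> C"
    and "\<And>ys. feasible_alloc C items ys \<Longrightarrow> total_value items ys \<le> B"
  shows "OPT C items \<le> B"
  unfolding OPT_def using zero_alloc_feasible[OF assms(1,2)] assms(3) by (intro cSup_least) auto

locale ota_threshold =
  fixes C L U :: real and \<phi> :: "real \<Rightarrow> real"
  assumes capacity_nonneg: "0 \<le> C"
    and threshold_continuous: "continuous_on {0..C} \<phi>"
    and threshold_mono: "mono_on {0..C} \<phi>"
    and threshold_nonneg: "0 \<le> \<phi> 0"
    and threshold_at_capacity: "U \<le> \<phi> C"
begin

abbreviation \<Phi> :: "real \<Rightarrow> real" where
  "\<Phi> w \<equiv> integral {0..w} \<phi>"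

lemma threshold_monoD: "0 \<le> a \<Longrightarrow> a \<le> b \<Longrightarrow> b \<le> C \<Longrightarrow> \<phi> a \<le> \<phi> b"
  using threshold_mono by (auto intro: mono_onD)

lemma integral_threshold_eq: "0 \<le> a \<Longrightarrow> a \<le> b \<Longrightarrow> b \<le> C \<Longrightarrow> integral {a..b} \<phi> = \<Phi> b - \<Phi> a"
  using Henstock_Kurzweil_Integration.integral_combine[where a = 0 and c = a and b = b and f = \<phi>]
    continuous_on_subset[OF threshold_continuous, of "{0..b}"]
  by (simp add: integrable_continuous_real)

lemma threshold_increment_bounds:
  assumes "0 \<le> a" "a \<le> b" "b \<le> C"
  shows "\<phi> a * (b - a) \<le> \<Phi> b - \<Phi> a" and "\<Phi> b - \<Phi> a \<le> \<phi> b * (b - a)"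
proof -
  have "\<phi> integrable_on {a..b}"
    using continuous_on_subset[OF threshold_continuous, of "{a..b}"] assms
    by (simp add: integrable_continuous_real)
  then have int: "(\<phi> has_integral (\<Phi> b - \<Phi> a)) {a..b}"
    using assms by (metis integrable_integral integral_threshold_eq)
  have const: "((\<lambda>_. c) has_integral c * (b - a)) {a..b}" for c
    using has_integral_const_real[of c a b] assms by (simp add: mult.commute)
  show "\<phi> a * (b - a) \<le> \<Phi> b - \<Phi> a"
    by (rule has_integral_le[OF const int]) (use assms in \<open>auto intro: threshold_monoD\<close>)
  show "\<Phi> b - \<Phi> a \<le> \<phi> b * (b - a)"
    by (rule has_integral_le[OF int const]) (use assms in \<open>auto intro: threshold_monoD\<close>)
qed

lemma threshold_integral_continuous: "continuous_on {0..C} \<Phi>"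
  using threshold_continuous by (intro indefinite_integral_continuous_1 integrable_continuous_real)

lemma ota_choice_greatest_maximizer:
  assumes A: "assumption_A L U (D, g)" and w: "0 \<le> w" "w \<le> C"
  defines "y \<equiv> ota_choice C \<phi> w (D, g)"
  shows "y \<in> {0..min D (C - w)}"
    and "z \<in> {0..min D (C - w)} \<Longrightarrow> g z - (\<Phi> (w + z) - \<Phi> w) \<le> g y - (\<Phi> (w + y) - \<Phi> w)"
    and "z \<in> {0..min D (C - w)} \<Longrightarrow>
      \<forall>z'\<in>{0..min D (C - w)}. g z' - (\<Phi> (w + z') - \<Phi> w) \<le> g z - (\<Phi> (w + z) - \<Phi> w) \<Longrightarrow> z \<le> y"
proof -
  let ?S = "{0..min D (C - w)}"
  let ?F = "\<lambda>z. g z - (\<Phi> (w + z) - \<Phi> w)"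
  have S_iff: "z \<in> ?S \<longleftrightarrow> 0 \<le> z \<and> z \<le> D \<and> w + z \<le> C" for z
    by auto
  have integral_eq: "integral {w..w + z} \<phi> = \<Phi> (w + z) - \<Phi> w" if "z \<in> ?S" for z
    using that w by (intro integral_threshold_eq) auto
  have "ota_argmax C \<phi> w (D, g) y' \<longleftrightarrow>
      y' \<in> ?S \<and> (\<forall>z\<in>?S. g z - integral {w..w + z} \<phi> \<le> g y' - integral {w..w + y'} \<phi>)" for y'
    unfolding ota_argmax_def Ball_def S_iff by simp
  then have argmax: "ota_argmax C \<phi> w (D, g) = (\<lambda>y'. y' \<in> ?S \<and> (\<forall>z\<in>?S. ?F z \<le> ?F y'))"
    using integral_eq by (intro ext) (metis (no_types, lifting))
  have "continuous_on ?S g"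
    using assumption_A_continuous[OF A] by (rule continuous_on_subset) auto
  moreover have "continuous_on ?S (\<lambda>z. \<Phi> (w + z))"
    using w by (intro continuous_on_compose2[OF threshold_integral_continuous] continuous_intros) auto
  ultimately have "continuous_on ?S ?F"
    by (intro continuous_intros)
  moreover have "?S \<noteq> {}"
    using A w by (auto simp: assumption_A_def)
  ultimately have "ota_argmax C \<phi> w (D, g) y"
    "\<And>z. ota_argmax C \<phi> w (D, g) z \<Longrightarrow> z \<le> y"
    using Greatest_maximizer_compact[of ?S ?F, OF compact_Icc] unfolding y_def ota_choice_def argmax
    by simp_all
  then show "y \<in> ?S" "z \<in> ?S \<Longrightarrow> ?F z \<le> ?F y"
    and "z \<in> ?S \<Longrightarrow> \<forall>z'\<in>?S. ?F z' \<le> ?F z \<Longrightarrow> z \<le> y"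
    unfolding argmax by blast+
qed

(* If the chord of g beyond y were steeper than \<phi> (w + y), then, by continuity of \<phi>, accepting
   slightly more than y would increase the pseudo-utility. *)
lemma ota_choice_marginal_value_le:
  assumes A: "assumption_A L U (D, g)" and w: "0 \<le> w" "w \<le> C"
  defines "y \<equiv> ota_choice C \<phi> w (D, g)"
  assumes "w + y < C" "y < x" "x \<le> D"
  shows "g x - g y \<le> \<phi> (w + y) * (x - y)"
proof (rule ccontr)
  define v where "v = w + y"
  define s where "s = (g x - g y) / (x - y)"
  assume "\<not> g x - g y \<le> \<phi> (w + y) * (x - y)"
  then have "\<phi> v < s"
    using \<open>y < x\<close> by (simp add: v_def s_def field_simps)
  have y: "0 \<le> y" "w + y \<le> C"
    using ota_choice_greatest_maximizer(1)[OF A w] by (auto simp: y_def)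
  then have "v \<in> {0..C}"
    using w by (simp add: v_def)
  moreover have "s - \<phi> v > 0"
    using \<open>\<phi> v < s\<close> by simp
  ultimately obtain d where "d > 0"
    and d: "\<And>u. u \<in> {0..C} \<Longrightarrow> dist u v < d \<Longrightarrow> dist (\<phi> u) (\<phi> v) < s - \<phi> v"
    using threshold_continuous unfolding continuous_on_iff by blast
  define t where "t = min (d / 2) (min (x - y) (C - v))"
  have t: "0 < t" "t < d" "t \<le> x - y" "v + t \<le> C"
    using \<open>d > 0\<close> \<open>y < x\<close> \<open>w + y < C\<close> by (auto simp: t_def v_def)
  then have "dist (\<phi> (v + t)) (\<phi> v) < s - \<phi> v"
    using d[of "v + t"] \<open>v \<in> {0..C}\<close> by (simp add: dist_real_def)
  then have "\<phi> (v + t) < s"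
    by (simp add: dist_real_def abs_less_iff)
  then have "\<phi> (v + t) * t < s * t"
    using t by (intro mult_strict_right_mono)
  moreover have "\<Phi> (v + t) - \<Phi> v \<le> \<phi> (v + t) * t"
    using threshold_increment_bounds(2)[of v "v + t"] t \<open>v \<in> {0..C}\<close> by simp
  ultimately have "\<Phi> (v + t) - \<Phi> v < s * t"
    by linarith
  moreover have "g y + s * t \<le> g (y + t)"
  proof -
    have "concave_on {0..D} g"
      using A by (simp add: assumption_A_def)
    then have "concave_on {y..x} g"
      unfolding concave_on_def by (rule convex_on_subset) (use y \<open>x \<le> D\<close> in auto)
    from concave_onD_Icc'[OF this, of "y + t"] t show ?thesis
      by (simp add: s_def algebra_simps)
  qed
  moreover have "g (y + t) - (\<Phi> (v + t) - \<Phi> w) \<le> g y - (\<Phi> v - \<Phi> w)"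
    using ota_choice_greatest_maximizer(2)[OF A w, of "y + t"] y t \<open>x \<le> D\<close>
    by (simp add: v_def y_def add.assoc)
  ultimately show False
    by linarith
qed

lemma ota_choice_dual_inequality:
  assumes A: "assumption_A L U (D, g)" and w: "0 \<le> w" "w \<le> C"
  defines "y \<equiv> ota_choice C \<phi> w (D, g)"
  assumes p: "\<phi> (w + y) \<le> p" and x: "0 \<le> x" "x \<le> D"
  shows "g x - p * x \<le> g y - (\<Phi> (w + y) - \<Phi> w)"
proof -
  have y: "0 \<le> y" "y \<le> D" "w + y \<le> C"
    using ota_choice_greatest_maximizer(1)[OF A w] by (auto simp: y_def)
  have "\<Phi> (w + y) - \<Phi> w \<le> \<phi> (w + y) * y"
    using threshold_increment_bounds(2)[of w "w + y"] w y by simp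
  also have "\<dots> \<le> p * y"
    using p y by (intro mult_right_mono)
  finally have price_y: "\<Phi> (w + y) - \<Phi> w \<le> p * y" .
  show ?thesis
  proof (cases "x \<le> y")
    case True
    have "\<Phi> (w + x) - \<Phi> w \<le> \<phi> (w + x) * x"
      using threshold_increment_bounds(2)[of w "w + x"] w x y True by simp
    also have "\<dots> \<le> p * x"
      using threshold_monoD[of "w + x" "w + y"] w x y p True by (intro mult_right_mono) auto
    finally show ?thesis
      using ota_choice_greatest_maximizer(2)[OF A w, of x] x y True by (simp add: y_def)
  next
    case False
    have "g x - g y \<le> p * (x - y)"
    proof (cases "w + y < C")
      case True
      then have "g x - g y \<le> \<phi> (w + y) * (x - y)"
        using ota_choice_marginal_value_le[OF A w] False x by (simp add: y_def)
      also have "\<dots> \<le> p * (x - y)"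
        using p False by (intro mult_right_mono) auto
      finally show ?thesis .
    next
      case False
      then have "U \<le> p"
        using y p threshold_at_capacity by simp
      have "g x - g y \<le> U * (x - y)"
        using assumption_A_increment_bounds(2)[OF A, of y x] y x \<open>\<not> x \<le> y\<close> by simp
      also have "\<dots> \<le> p * (x - y)"
        using \<open>U \<le> p\<close> \<open>\<not> x \<le> y\<close> by (intro mult_right_mono) auto
      finally show ?thesis .
    qed
    then show ?thesis
      using price_y by (simp add: algebra_simps)
  qed
qed

lemma ota_choice_eq_size:
  assumes A: "assumption_A L U (D, g)" and w: "0 \<le> w" "w \<le> C"
  defines "y \<equiv> ota_choice C \<phi> w (D, g)"
  assumes b: "b \<le> C" "\<phi> b \<le> L" and "w + y < b"
  shows "y = D"
proof (rule ccontr)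
  let ?F = "\<lambda>z. g z - (\<Phi> (w + z) - \<Phi> w)"
  assume "y \<noteq> D"
  have y: "0 \<le> y" "y < D"
    using ota_choice_greatest_maximizer(1)[OF A w] \<open>y \<noteq> D\<close> by (auto simp: y_def)
  define z where "z = min D (b - w)"
  have z: "y < z" "z \<in> {0..min D (C - w)}" "w + z \<le> b"
    using y \<open>w + y < b\<close> b by (auto simp: z_def)
  have "\<Phi> (w + z) - \<Phi> (w + y) \<le> \<phi> (w + z) * (z - y)"
    using threshold_increment_bounds(2)[of "w + y" "w + z"] w y z b by simp
  also have "\<dots> \<le> L * (z - y)"
    using threshold_monoD[of "w + z" b] w y z b by (intro mult_right_mono) auto
  also have "\<dots> \<le> g z - g y"
    using assumption_A_increment_bounds(1)[OF A, of y z] y z by simp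
  finally have "?F y \<le> ?F z"
    by simp
  then have "\<forall>z'\<in>{0..min D (C - w)}. ?F z' \<le> ?F z"
    using ota_choice_greatest_maximizer(2)[OF A w] unfolding y_def by (meson order_trans)
  then have "z \<le> y"
    using ota_choice_greatest_maximizer(3)[OF A w z(2)] by (simp add: y_def)
  then show False
    using z by simp
qed

lemma ota_run_utilization:
  assumes "valid_instance L U items" "0 \<le> w" "w \<le> C"
  shows "0 \<le> sum_list (ota_run C \<phi> w items) \<and> w + sum_list (ota_run C \<phi> w items) \<le> C"
  using assms
proof (induction items arbitrary: w)
  case Nil
  then show ?case by simp
next
  case (Cons it items)
  obtain D g where it: "it = (D, g)"
    by fastforce
  define y where "y = ota_choice C \<phi> w (D, g)"
  have "y \<in> {0..min D (C - w)}"
    using ota_choice_greatest_maximizer(1) Cons.prems it by (simp add: y_def)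
  then show ?case
    using Cons.IH[of "w + y"] Cons.prems by (simp add: it y_def Let_def add.assoc)
qed

lemma ota_run_dual_inequality:
  assumes "valid_instance L U items" "0 \<le> w" "w \<le> C"
    and "\<phi> (w + sum_list (ota_run C \<phi> w items)) \<le> p" "within_sizes items xs"
  shows "total_value items xs - p * sum_list xs
    \<le> total_value items (ota_run C \<phi> w items) - (\<Phi> (w + sum_list (ota_run C \<phi> w items)) - \<Phi> w)"
  using assms
proof (induction items arbitrary: w xs)
  case Nil
  then show ?case by simp
next
  case (Cons it items)
  obtain D g where it: "it = (D, g)"
    by fastforce
  obtain x xs' where xs: "xs = x # xs'" "0 \<le> x" "x \<le> D" "within_sizes items xs'"
    using Cons.prems(5) by (auto simp: it list_all2_Cons1)
  have A: "assumption_A L U (D, g)" and valid: "valid_instance L U items"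
    using Cons.prems(1) by (simp_all add: it)
  define y where "y = ota_choice C \<phi> w (D, g)"
  define W where "W = w + y + sum_list (ota_run C \<phi> (w + y) items)"
  have y: "0 \<le> y" "w + y \<le> C"
    using ota_choice_greatest_maximizer(1)[OF A Cons.prems(2,3)] by (auto simp: y_def)
  have W: "w + y \<le> W" "W \<le> C"
    using ota_run_utilization[OF valid, of "w + y"] Cons.prems(2) y by (auto simp: W_def)
  have p: "\<phi> W \<le> p"
    using Cons.prems(4) by (simp add: it y_def W_def Let_def add.assoc)
  have "g x - p * x \<le> g y - (\<Phi> (w + y) - \<Phi> w)"
    using ota_choice_dual_inequality[OF A Cons.prems(2,3) _ xs(2,3)]
      threshold_monoD[of "w + y" W] Cons.prems(2) y W p unfolding y_def by simp
  moreover have "total_value items xs' - p * sum_list xs'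
      \<le> total_value items (ota_run C \<phi> (w + y) items) - (\<Phi> W - \<Phi> (w + y))"
    using Cons.IH[OF valid _ y(2) _ xs(4)] Cons.prems(2) y p by (simp add: W_def)
  ultimately show ?case
    by (simp add: it xs(1) y_def W_def Let_def add.assoc algebra_simps)
qed

lemma ota_run_optimal_below:
  assumes "valid_instance L U items" "0 \<le> w" "w \<le> C"
    and "b \<le> C" "\<phi> b \<le> L" "w + sum_list (ota_run C \<phi> w items) < b" "within_sizes items xs"
  shows "total_value items xs \<le> total_value items (ota_run C \<phi> w items)"
  using assms
proof (induction items arbitrary: w xs)
  case Nil
  then show ?case by simp
next
  case (Cons it items)
  obtain D g where it: "it = (D, g)"
    by fastforce
  obtain x xs' where xs: "xs = x # xs'" "0 \<le> x" "x \<le> D" "within_sizes items xs'"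
    using Cons.prems(7) by (auto simp: it list_all2_Cons1)
  have A: "assumption_A L U (D, g)" and valid: "valid_instance L U items"
    using Cons.prems(1) by (simp_all add: it)
  define y where "y = ota_choice C \<phi> w (D, g)"
  have y: "0 \<le> y" "w + y \<le> C"
    using ota_choice_greatest_maximizer(1)[OF A Cons.prems(2,3)] by (auto simp: y_def)
  have rest: "w + y + sum_list (ota_run C \<phi> (w + y) items) < b"
    using Cons.prems(6) by (simp add: it y_def Let_def add.assoc)
  moreover have "0 \<le> sum_list (ota_run C \<phi> (w + y) items)"
    using ota_run_utilization[OF valid, of "w + y"] Cons.prems(2) y by simp
  ultimately have "y = D"
    using ota_choice_eq_size[OF A Cons.prems(2,3) Cons.prems(4,5)] by (simp add: y_def)
  then have "g x \<le> g y"
    using A xs(2,3) by (auto simp: assumption_A_def intro: mono_onD)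
  moreover have "total_value items xs' \<le> total_value items (ota_run C \<phi> (w + y) items)"
    using Cons.IH[OF valid _ y(2) Cons.prems(4,5) rest xs(4)] Cons.prems(2) y by simp
  ultimately show ?case
    by (simp add: it xs(1) y_def Let_def)
qed

lemma ALG_OTA_ge_threshold_integral:
  assumes "valid_instance L U items"
  shows "\<Phi> (sum_list (ota_run C \<phi> 0 items)) \<le> ALG_OTA C \<phi> items"
  using ota_run_dual_inequality[OF assms order_refl capacity_nonneg order_refl,
      of "replicate (length items) 0"]
    zero_alloc_feasible[OF assms capacity_nonneg]
  by (simp add: ALG_OTA_def feasible_alloc_iff sum_list_replicate)

lemma ALG_OTA_nonneg:
  assumes "valid_instance L U items"
  shows "0 \<le> ALG_OTA C \<phi> items"
proof -
  define W where "W = sum_list (ota_run C \<phi> 0 items)"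
  have "0 \<le> W" "W \<le> C"
    using ota_run_utilization[OF assms order_refl capacity_nonneg] by (simp_all add: W_def)
  then have "\<phi> 0 * W \<le> \<Phi> W"
    using threshold_increment_bounds(1)[of 0 W] by simp
  moreover have "0 \<le> \<phi> 0 * W"
    using threshold_nonneg \<open>0 \<le> W\<close> by simp
  ultimately show ?thesis
    using ALG_OTA_ge_threshold_integral[OF assms] by (simp add: W_def)
qed

lemma feasible_value_le_ALG_OTA:
  assumes "valid_instance L U items" "feasible_alloc C items ys"
  defines "W \<equiv> sum_list (ota_run C \<phi> 0 items)"
  shows "total_value items ys \<le> ALG_OTA C \<phi> items - \<Phi> W + \<phi> W * C"
proof -
  have "0 \<le> W" "W \<le> C"
    using ota_run_utilization[OF assms(1) order_refl capacity_nonneg] by (simp_all add: W_def)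
  then have "0 \<le> \<phi> W"
    using threshold_nonneg threshold_monoD[of 0 W] by simp
  then have "\<phi> W * sum_list ys \<le> \<phi> W * C"
    using assms(2) by (simp add: feasible_alloc_iff mult_left_mono)
  moreover have "total_value items ys - \<phi> W * sum_list ys \<le> ALG_OTA C \<phi> items - \<Phi> W"
    using ota_run_dual_inequality[OF assms(1) order_refl capacity_nonneg, of "\<phi> W" ys] assms(2)
    by (simp add: ALG_OTA_def W_def feasible_alloc_iff)
  ultimately show ?thesis
    by linarith
qed

lemma feasible_value_le_ALG_OTA_below:
  assumes "valid_instance L U items" "feasible_alloc C items ys"
    and "b \<le> C" "\<phi> b \<le> L" "sum_list (ota_run C \<phi> 0 items) < b"
  shows "total_value items ys \<le> ALG_OTA C \<phi> items"
  using ota_run_optimal_below[OF assms(1) order_refl capacity_nonneg assms(3,4), of ys] assms(2,5)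
  by (simp add: ALG_OTA_def feasible_alloc_iff)

end

lemma ereal_divide_le_of_le_mult:
  fixes a b c :: real
  assumes "0 \<le> b" "0 \<le> c" "a \<le> c * b"
  shows "ereal a / ereal b \<le> ereal c"
proof (cases "b = 0")
  case True
  \<comment> \<open>then the quotient is a * \<infinity>, and a \<le> 0\<close>
  then show ?thesis
    using assms by (cases "a = 0") (auto simp: not_le)
next
  case False
  then show ?thesis
    using assms by (simp add: pos_divide_le_eq)
qed

locale phi_star_setting =
  fixes C L U :: real
  assumes C_pos: "0 < C" and L_pos: "0 < L" and L_le_U: "L \<le> U"
begin

definition \<alpha> :: real where
  "\<alpha> = 1 + ln (U / L)"

definition \<beta> :: real where
  "\<beta> = C / \<alpha>"

lemma alpha_ge_1: "1 \<le> \<alpha>"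
  using L_pos L_le_U by (simp add: \<alpha>_def)

lemma alpha_mult_beta: "\<alpha> * \<beta> = C"
  using alpha_ge_1 by (simp add: \<beta>_def)

lemma beta_pos: "0 < \<beta>"
  using alpha_ge_1 C_pos by (simp add: \<beta>_def)

lemma beta_le_C: "\<beta> \<le> C"
  using alpha_ge_1 C_pos by (simp add: \<beta>_def divide_le_eq)

lemma phi_star_max_form: "phi_star C L U w = L * exp (max (\<alpha> * w / C - 1) 0)"
proof -
  have "w < \<beta> \<longleftrightarrow> \<alpha> * w / C - 1 < 0"
    using alpha_ge_1 C_pos by (simp add: \<beta>_def field_simps)
  then show ?thesis
    by (auto simp: phi_star_def Let_def max_def \<alpha>_def \<beta>_def)
qed

lemma phi_star_below: "w \<le> \<beta> \<Longrightarrow> phi_star C L U w = L"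
  using alpha_ge_1 C_pos by (simp add: phi_star_max_form \<beta>_def field_simps)

lemma phi_star_above: "\<beta> \<le> w \<Longrightarrow> phi_star C L U w = L * exp (\<alpha> * w / C - 1)"
  using alpha_ge_1 C_pos by (simp add: phi_star_max_form \<beta>_def field_simps)

sublocale ota_threshold C L U "phi_star C L U"
proof
  show "0 \<le> C"
    using C_pos by simp
  show "continuous_on {0..C} (phi_star C L U)"
    unfolding phi_star_max_form using C_pos by (intro continuous_intros) auto
  show "mono_on {0..C} (phi_star C L U)"
  proof (intro mono_onI)
    fix r s :: real assume "r \<le> s"
    then have "\<alpha> * r / C - 1 \<le> \<alpha> * s / C - 1"
      using alpha_ge_1 C_pos by (simp add: divide_right_mono)
    then show "phi_star C L U r \<le> phi_star C L U s"
      using L_pos by (simp add: phi_star_max_form max.coboundedI1)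
  qed
  show "0 \<le> phi_star C L U 0"
    using L_pos by (simp add: phi_star_max_form)
  show "U \<le> phi_star C L U C"
    using beta_le_C L_pos L_le_U C_pos by (simp add: phi_star_above \<alpha>_def)
qed

lemma integral_phi_star_below:
  assumes "0 \<le> u" "u \<le> \<beta>"
  shows "\<Phi> u = L * u"
proof -
  have "\<Phi> u = integral {0..u} (\<lambda>_. L)"
    using assms by (intro integral_cong) (simp add: phi_star_below)
  then show ?thesis
    using assms by simp
qed

lemma integral_phi_star_above:
  assumes "\<beta> \<le> u" "u \<le> C"
  shows "\<Phi> u = \<beta> * phi_star C L U u"
proof -
  define F where "F x = \<beta> * L * exp (\<alpha> * x / C - 1)" for x
  have "(F has_vector_derivative phi_star C L U x) (at x within {\<beta>..u})" if "x \<in> {\<beta>..u}" for x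
  proof -
    have "(F has_real_derivative \<beta> * L * (exp (\<alpha> * x / C - 1) * (\<alpha> / C))) (at x within {\<beta>..u})"
      unfolding F_def using C_pos by (auto intro!: derivative_eq_intros)
    moreover have "\<beta> * L * (exp (\<alpha> * x / C - 1) * (\<alpha> / C)) = phi_star C L U x"
      using that alpha_ge_1 C_pos by (simp add: phi_star_above \<beta>_def)
    ultimately show ?thesis
      by (simp add: has_real_derivative_iff_has_vector_derivative)
  qed
  then have "integral {\<beta>..u} (phi_star C L U) = F u - F \<beta>"
    using assms by (intro integral_unique fundamental_theorem_of_calculus) auto
  moreover have "F \<beta> = \<Phi> \<beta>" "F u = \<beta> * phi_star C L U u"
    using assms beta_pos alpha_mult_beta C_pos
    by (simp_all add: F_def integral_phi_star_below phi_star_above field_simps)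
  ultimately show ?thesis
    using integral_threshold_eq[of \<beta> u] assms beta_pos by simp
qed

lemma OPT_le_alpha_ALG_OTA:
  assumes "valid_instance L U items"
  shows "OPT C items \<le> \<alpha> * ALG_OTA C (phi_star C L U) items"
proof (rule OPT_le[OF assms capacity_nonneg])
  fix ys assume ys: "feasible_alloc C items ys"
  define W where "W = sum_list (ota_run C (phi_star C L U) 0 items)"
  let ?ALG = "ALG_OTA C (phi_star C L U) items"
  have "0 \<le> ?ALG"
    using ALG_OTA_nonneg[OF assms] .
  have W: "W \<le> C"
    using ota_run_utilization[OF assms order_refl capacity_nonneg] by (simp add: W_def)
  show "total_value items ys \<le> \<alpha> * ?ALG"
  proof (cases "W < \<beta>")
    case True
    then have "total_value items ys \<le> ?ALG"
      using feasible_value_le_ALG_OTA_below[OF assms ys beta_le_C] phi_star_below[of \<beta>]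
      by (simp add: W_def)
    also have "\<dots> \<le> \<alpha> * ?ALG"
      using alpha_ge_1 \<open>0 \<le> ?ALG\<close> by (simp add: mult_le_cancel_right1)
    finally show ?thesis .
  next
    case False
    then have "\<Phi> W = \<beta> * phi_star C L U W"
      using W by (simp add: integral_phi_star_above)
    then have "\<Phi> W + (\<alpha> - 1) * \<Phi> W = (\<alpha> * \<beta>) * phi_star C L U W"
      by (simp add: algebra_simps)
    then have "\<Phi> W + (\<alpha> - 1) * \<Phi> W = phi_star C L U W * C"
      by (simp add: alpha_mult_beta mult.commute)
    moreover have "(\<alpha> - 1) * \<Phi> W \<le> (\<alpha> - 1) * ?ALG"
      using ALG_OTA_ge_threshold_integral[OF assms] alpha_ge_1 by (simp add: W_def mult_left_mono)
    ultimately show ?thesis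
      using feasible_value_le_ALG_OTA[OF assms ys] by (simp add: W_def algebra_simps)
  qed
qed

lemma linear_item_valid: "valid_instance L U [(C, \<lambda>y. L * y)]"
proof -
  have "concave_on {0..C} (\<lambda>y. L * y)"
    by (simp add: concave_on_iff algebra_simps)
  moreover have "mono_on {0..C} (\<lambda>y. L * y)"
    using L_pos by (intro mono_onI) simp
  moreover have "((\<lambda>y. L * y) has_real_derivative L) (at y within {0..C})" for y
    by (auto intro!: derivative_eq_intros)
  ultimately show ?thesis
    using C_pos L_le_U by (auto simp: valid_instance_def assumption_A_def intro!: exI[of _ "\<lambda>_. L"])
qed

lemma linear_item_ota_choice: "ota_choice C (phi_star C L U) 0 (C, \<lambda>y. L * y) = \<beta>"
proof -
  define y where "y = ota_choice C (phi_star C L U) 0 (C, \<lambda>y. L * y)"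
  have A: "assumption_A L U (C, \<lambda>y. L * y)"
    using linear_item_valid by simp
  note choice = ota_choice_greatest_maximizer[OF A order_refl capacity_nonneg, folded y_def]
  have below: "L * z - \<Phi> z \<le> 0" if "z \<in> {0..C}" for z
    using threshold_increment_bounds(1)[of 0 z] that phi_star_below[of 0] beta_pos by simp
  have "\<beta> \<in> {0..C}" "L * \<beta> - \<Phi> \<beta> = 0"
    using beta_pos beta_le_C by (simp_all add: integral_phi_star_below)
  then have "\<beta> \<le> y"
    using choice(3)[of \<beta>] below by simp
  moreover have "\<not> \<beta> < y"
  proof
    assume "\<beta> < y"
    define s where "s = \<alpha> * y / C - 1"
    have "\<alpha> * \<beta> < \<alpha> * y"
      using \<open>\<beta> < y\<close> alpha_ge_1 by simp
    then have "0 < s"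
      using alpha_mult_beta C_pos by (simp add: s_def field_simps)
    moreover have "0 < s\<^sup>2 / 2"
      using \<open>0 < s\<close> by simp
    ultimately have "1 + s < exp s"
      using exp_lower_Taylor_quadratic[of s] by linarith
    then have "\<beta> * (1 + s) < \<beta> * exp s"
      using beta_pos by simp
    moreover have "\<beta> * (1 + s) = y"
      using alpha_mult_beta C_pos by (simp add: s_def field_simps)
    moreover have "y \<le> C"
      using choice(1) by simp
    then have "\<Phi> y = \<beta> * (L * exp s)"
      using \<open>\<beta> < y\<close> by (simp add: integral_phi_star_above phi_star_above s_def)
    ultimately have "L * y - \<Phi> y < 0"
      using L_pos by (simp add: algebra_simps)
    moreover have "L * \<beta> - \<Phi> \<beta> \<le> L * y - \<Phi> y"
      using choice(2)[of \<beta>] \<open>\<beta> \<in> {0..C}\<close> by simp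
    ultimately show False
      using \<open>L * \<beta> - \<Phi> \<beta> = 0\<close> by simp
  qed
  ultimately show ?thesis
    by (simp add: y_def)
qed

lemma linear_item_ratio:
  "ereal (OPT C [(C, \<lambda>y. L * y)]) / ereal (ALG_OTA C (phi_star C L U) [(C, \<lambda>y. L * y)]) = ereal \<alpha>"
proof -
  let ?items = "[(C, \<lambda>y. L * y)]"
  have ALG: "ALG_OTA C (phi_star C L U) ?items = L * \<beta>"
    by (simp add: ALG_OTA_def linear_item_ota_choice total_value_def)
  have "feasible_alloc C ?items ys \<Longrightarrow> total_value ?items ys \<le> L * C" for ys
    using L_pos by (cases ys) (auto simp: feasible_alloc_def total_value_def)
  then have "OPT C ?items \<le> L * C"
    using OPT_le[OF linear_item_valid capacity_nonneg] by blast
  moreover have "L * C \<le> OPT C ?items"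
    unfolding OPT_def
  proof (rule cSup_upper)
    show "L * C \<in> {total_value ?items ys |ys. feasible_alloc C ?items ys}"
      using C_pos by (auto simp: feasible_alloc_def total_value_def intro!: exI[of _ "[C]"])
    show "bdd_above {total_value ?items ys |ys. feasible_alloc C ?items ys}"
      using \<open>\<And>ys. feasible_alloc C ?items ys \<Longrightarrow> total_value ?items ys \<le> L * C\<close>
      by (auto simp: bdd_above_def)
  qed
  ultimately have "OPT C ?items = L * C"
    by simp
  moreover have "L * C / (L * \<beta>) = \<alpha>"
    using L_pos alpha_ge_1 C_pos by (simp add: \<beta>_def)
  ultimately show ?thesis
    using ALG L_pos beta_pos by simp
qed

end

theorem theorem1:
  fixes C L U :: real
  assumes "C > 0" and "0 < L" and "L \<le> U"
  shows "competitive_ratio_OTA C L U (phi_star C L U) = ereal (1 + ln (U / L))"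
proof -
  interpret phi_star_setting C L U
    using assms by unfold_locales
  have "competitive_ratio_OTA C L U (phi_star C L U) \<le> ereal \<alpha>"
    unfolding competitive_ratio_OTA_def
  proof (rule SUP_least)
    fix items assume "items \<in> {items. valid_instance L U items}"
    then show "ereal (OPT C items) / ereal (ALG_OTA C (phi_star C L U) items) \<le> ereal \<alpha>"
      using alpha_ge_1 ALG_OTA_nonneg OPT_le_alpha_ALG_OTA
      by (intro ereal_divide_le_of_le_mult) auto
  qed
  moreover have "ereal \<alpha> \<le> competitive_ratio_OTA C L U (phi_star C L U)"
    unfolding competitive_ratio_OTA_def linear_item_ratio[symmetric]
    using linear_item_valid by (intro SUP_upper) simp
  ultimately show ?thesis
    by (simp add: \<alpha>_def)
qed

end
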